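(* For any explicit Runge--Kutta method $(A,b)$, the step-size coefficient satisfies $\gamma(A,b)\le R(\varphi_{A,b})$.
   Context: An $m$-stage explicit Runge--Kutta method has strictly lower-triangular $A=(a_{ij})\in\mathbb{R}^{m\times m}$ and $b\in\mathbb{R}^m$. Its stability function is the polynomial $\varphi_{A,b}(z)=1+zb^\top(I-zA)^{-1}e$, $e=(1,\dots,1)^\top$. The radius of absolute monotonicity is $R(\varphi)=\sup\{r\ge0:\ \varphi^{(j)}(z)\ge0\text{ for all }j\ge0\text{ and all }z\in[-r,0]\}$. Positivity polynomials: for variables $\xi^j_\ell$ ($1\le j\le m$, $\ell\in\mathbb{Z}$) and a sequence $(u_\ell)_{\ell\in\mathbb{Z}}$, define $y^i_\ell=u_\ell+\sum_{j<i}a_{ij}\xi^j_\ell(y^j_{\ell-1}-y^j_\ell)$ and $\tilde u_\ell=u_\ell+\sum_ib_i\xi^i_\ell(y^i_{\ell-1}-y^i_\ell)$ (this is one ERK step for $u_k'=q_k(u,t)(u_{k-1}-u_k)/\Delta x$ with $\xi^j_k=\frac{\Delta t}{\Delta x}q_k(y^j,t_n+c_j\Delta t)$). Then $\tilde u_k=\sum_{i=0}^mP_i(\xi)u_{k-i}$ with polynomials $P_i$ (independent of $k$) in the $m(m+1)/2$ variables $\xi^j_\ell$, $1\le j\le m$, $k-(m-j)\le\ell\le k$. The step-size coefficient is $\gamma(A,b)=\sup\{\delta\ge0: P_i(\xi)\ge0$ for all $0\le i\le m$, all $\xi\in[0,\delta]^{m(m+1)/2}\}$ (or $0$ if empty).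 *)

theory Defs
  imports "HOL-Analysis.Analysis"
begin

text \<open>An explicit Runge--Kutta method with m stages is given by
  A :: nat => nat => real (entries A i j, stages indexed 0..m-1) and b :: nat => real.\<close>

definition erk :: "nat \<Rightarrow> (nat \<Rightarrow> nat \<Rightarrow> real) \<Rightarrow> bool" where
  "erk m A \<longleftrightarrow> (\<forall>i<m. \<forall>j<m. i \<le> j \<longrightarrow> A i j = 0)"

text \<open>The vector (I - zA)^{-1} e: the unique solution g of (I - zA) g = e
  (components outside 0..m-1 set to 0).\<close>

definition resolvent_e :: "nat \<Rightarrow> (nat \<Rightarrow> nat \<Rightarrow> real) \<Rightarrow> real \<Rightarrow> nat \<Rightarrow> real" where
  "resolvent_e m A z = (THE g. (\<forall>i<m. g i - z * (\<Sum>j<m. A i j * g j) = 1) \<and> (\<forall>i. m \<le> i \<longrightarrow> g i = 0))"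

definition stab_fun :: "nat \<Rightarrow> (nat \<Rightarrow> nat \<Rightarrow> real) \<Rightarrow> (nat \<Rightarrow> real) \<Rightarrow> real \<Rightarrow> real" where
  "stab_fun m A b z = 1 + z * (\<Sum>i<m. b i * resolvent_e m A z i)"

definition abs_mono_radius :: "(real \<Rightarrow> real) \<Rightarrow> ereal" where
  "abs_mono_radius \<phi> = Sup (insert 0 {ereal r | r. r \<ge> 0 \<and>
      (\<forall>j::nat. \<forall>z\<in>{-r..0}. (deriv ^^ j) \<phi> z \<ge> 0)})"

text \<open>Stage values y^i_l of one ERK step for the nonlinear upwind problem,
  with variables xi i l and data u l (stage index i = 0..m-1 corresponds to stage i+1).\<close>

fun stage_val :: "(nat \<Rightarrow> nat \<Rightarrow> real) \<Rightarrow> (nat \<Rightarrow> int \<Rightarrow> real) \<Rightarrow> (int \<Rightarrow> real) \<Rightarrow> nat \<Rightarrow> int \<Rightarrow> real" where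
  "stage_val A \<xi> u i l = u l + (\<Sum>j<i. A i j * \<xi> j l * (stage_val A \<xi> u j (l - 1) - stage_val A \<xi> u j l))"

definition step_val :: "nat \<Rightarrow> (nat \<Rightarrow> nat \<Rightarrow> real) \<Rightarrow> (nat \<Rightarrow> real) \<Rightarrow> (nat \<Rightarrow> int \<Rightarrow> real) \<Rightarrow> (int \<Rightarrow> real) \<Rightarrow> int \<Rightarrow> real" where
  "step_val m A b \<xi> u l = u l + (\<Sum>i<m. b i * \<xi> i l * (stage_val A \<xi> u i (l - 1) - stage_val A \<xi> u i l))"

text \<open>Positivity polynomial P_i evaluated at xi: the coefficient of u_{k-i} in tilde u_k
  (tilde u_k is linear in u, so this is tilde u_k for u the indicator of k-i).\<close>

definition pos_poly :: "nat \<Rightarrow> (nat \<Rightarrow> nat \<Rightarrow> real) \<Rightarrow> (nat \<Rightarrow> real) \<Rightarrow> int \<Rightarrow> nat \<Rightarrow> (nat \<Rightarrow> int \<Rightarrow> real) \<Rightarrow> real" where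
  "pos_poly m A b k i \<xi> = step_val m A b \<xi> (\<lambda>l. if l = k - int i then 1 else 0) k"

definition stepsize_coeff :: "nat \<Rightarrow> (nat \<Rightarrow> nat \<Rightarrow> real) \<Rightarrow> (nat \<Rightarrow> real) \<Rightarrow> ereal" where
  "stepsize_coeff m A b = Sup (insert 0 {ereal \<delta> | \<delta>. \<delta> \<ge> 0 \<and>
      (\<forall>i\<le>m. \<forall>k::int. \<forall>\<xi>. (\<forall>j l. 0 \<le> \<xi> j l \<and> \<xi> j l \<le> \<delta>) \<longrightarrow> pos_poly m A b k i \<xi> \<ge> 0)})"

end

theory Submission
  imports Defs
begin

text \<open>Run one step with all \<open>\<xi> = \<delta>\<close> on the geometric data \<open>u l = w ^ (k - l)\<close>: every
  stage value is then \<open>g i * w ^ (k - l)\<close> with \<open>g = (I - zA)\<^sup>-\<^sup>1 e\<close> and \<open>z = \<delta> (w - 1)\<close>,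
  so the new value is \<open>\<phi> z\<close>. Since the step is linear and local in \<open>u\<close>, the same value
  is \<open>\<Sum>n. P n \<delta> * w ^ n\<close>, i.e. \<open>\<phi> z = (\<Sum>n. P n \<delta> * (1 + z / \<delta>) ^ n)\<close>. If all
  \<open>P n \<delta> \<ge> 0\<close>, every derivative of \<open>\<phi>\<close> is again a nonnegative combination of powers of
  \<open>1 + z / \<delta>\<close>, hence nonnegative on \<open>[-\<delta>, 0]\<close>.\<close>

declare stage_val.simps[simp del]

fun stage_resolvent :: "(nat \<Rightarrow> nat \<Rightarrow> real) \<Rightarrow> real \<Rightarrow> nat \<Rightarrow> real" where
  "stage_resolvent A z i = 1 + z * (\<Sum>j<i. A i j * stage_resolvent A z j)"

declare stage_resolvent.simps[simp del]

lemma resolvent_e_eq_stage_resolvent: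
  assumes "erk m A"
  shows "resolvent_e m A z = (\<lambda>i. if i < m then stage_resolvent A z i else 0)"
proof -
  let ?g = "\<lambda>i. if i < m then stage_resolvent A z i else 0"
  have lower: "(\<Sum>j<m. A i j * g j) = (\<Sum>j<i. A i j * g j)" if "i < m" for i and g :: "nat \<Rightarrow> real"
    by (rule sum.mono_neutral_right) (use that assms in \<open>auto simp: erk_def\<close>)
  have solves: "(\<forall>i<m. ?g i - z * (\<Sum>j<m. A i j * ?g j) = 1) \<and> (\<forall>i. m \<le> i \<longrightarrow> ?g i = 0)"
  proof (intro conjI allI impI)
    fix i assume i: "i < m"
    have "(\<Sum>j<m. A i j * ?g j) = (\<Sum>j<i. A i j * stage_resolvent A z j)"
      unfolding lower[OF i] using i by (intro sum.cong) auto
    then show "?g i - z * (\<Sum>j<m. A i j * ?g j) = 1"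
      using i stage_resolvent.simps[of A z i] by simp
  qed simp
  have unique: "g = ?g"
    if g: "(\<forall>i<m. g i - z * (\<Sum>j<m. A i j * g j) = 1) \<and> (\<forall>i. m \<le> i \<longrightarrow> g i = 0)" for g
  proof
    fix i
    show "g i = ?g i"
    proof (induction i rule: less_induct)
      case (less i)
      show ?case
      proof (cases "i < m")
        case True
        have "g i = 1 + z * (\<Sum>j<i. A i j * g j)"
          using g True lower[OF True, of g] by (metis diff_eq_eq add.commute)
        also have "\<dots> = stage_resolvent A z i"
          using less True by (subst stage_resolvent.simps) (auto intro!: sum.cong)
        finally show ?thesis using True by simp
      qed (use g in simp)
    qed
  qed
  show ?thesis
    unfolding resolvent_e_def using solves unique by (rule the_equality)
qed

lemma stage_val_geometric:
  assumes "l \<le> k"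
  shows "stage_val A (\<lambda>_ _. \<delta>) (\<lambda>l. w ^ nat (k - l)) i l
           = stage_resolvent A (\<delta> * (w - 1)) i * w ^ nat (k - l)"
  using assms
proof (induction i arbitrary: l rule: less_induct)
  case (less i)
  let ?g = "stage_resolvent A (\<delta> * (w - 1))"
  define n where "n = nat (k - l)"
  have n_pred: "nat (k - (l - 1)) = Suc n"
    using less.prems n_def by simp
  have "stage_val A (\<lambda>_ _. \<delta>) (\<lambda>l. w ^ nat (k - l)) i l
      = w ^ n + (\<Sum>j<i. A i j * \<delta> * (?g j * w ^ Suc n - ?g j * w ^ n))"
    using less by (subst stage_val.simps) (auto simp: n_def[symmetric] n_pred intro!: sum.cong)
  also have "\<dots> = w ^ n * (1 + \<delta> * (w - 1) * (\<Sum>j<i. A i j * ?g j))"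
    by (simp add: sum_distrib_left algebra_simps)
  also have "\<dots> = ?g i * w ^ n"
    by (simp add: stage_resolvent.simps[of A _ i])
  finally show ?case
    by (simp add: n_def)
qed

lemma step_val_geometric:
  assumes "erk m A"
  shows "step_val m A b (\<lambda>_ _. \<delta>) (\<lambda>l. w ^ nat (k - l)) k = stab_fun m A b (\<delta> * (w - 1))"
proof -
  let ?g = "stage_resolvent A (\<delta> * (w - 1))"
  have "step_val m A b (\<lambda>_ _. \<delta>) (\<lambda>l. w ^ nat (k - l)) k
      = 1 + (\<Sum>i<m. b i * \<delta> * (?g i * w - ?g i))"
    unfolding step_val_def by (simp add: stage_val_geometric)
  also have "\<dots> = stab_fun m A b (\<delta> * (w - 1))"
    unfolding stab_fun_def resolvent_e_eq_stage_resolvent[OF assms]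
    by (simp add: sum_distrib_left algebra_simps)
  finally show ?thesis .
qed

lemma stage_val_local:
  assumes "\<And>t. l - int i \<le> t \<Longrightarrow> t \<le> l \<Longrightarrow> u t = v t"
  shows "stage_val A \<xi> u i l = stage_val A \<xi> v i l"
  using assms
proof (induction i arbitrary: l rule: less_induct)
  case (less i)
  have "stage_val A \<xi> u j l' = stage_val A \<xi> v j l'"
    if "j < i" "l' = l - 1 \<or> l' = l" for j l'
    using that less.prems by (intro less.IH) auto
  moreover have "u l = v l"
    using less.prems by auto
  ultimately show ?case
    by (subst (1 2) stage_val.simps) (auto intro!: sum.cong)
qed

lemma stage_val_sum:
  assumes "finite S"
  shows "stage_val A \<xi> (\<lambda>l. \<Sum>n\<in>S. c n * e n l) i l = (\<Sum>n\<in>S. c n * stage_val A \<xi> (e n) i l)"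
proof (induction i arbitrary: l rule: less_induct)
  case (less i)
  let ?d = "\<lambda>n j. stage_val A \<xi> (e n) j (l - 1) - stage_val A \<xi> (e n) j l"
  have "stage_val A \<xi> (\<lambda>l. \<Sum>n\<in>S. c n * e n l) i l
      = (\<Sum>n\<in>S. c n * e n l) + (\<Sum>j<i. \<Sum>n\<in>S. c n * (A i j * \<xi> j l * ?d n j))"
    by (subst stage_val.simps)
       (simp add: less.IH sum_distrib_left sum_subtractf[symmetric] algebra_simps)
  also have "\<dots> = (\<Sum>n\<in>S. c n * e n l) + (\<Sum>n\<in>S. \<Sum>j<i. c n * (A i j * \<xi> j l * ?d n j))"
    by (subst sum.swap) simp
  also have "\<dots> = (\<Sum>n\<in>S. c n * stage_val A \<xi> (e n) i l)"
    by (subst (2) stage_val.simps) (simp add: sum.distrib sum_distrib_left algebra_simps)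
  finally show ?case .
qed

lemma step_val_sum:
  assumes "finite S"
  shows "step_val m A b \<xi> (\<lambda>l. \<Sum>n\<in>S. c n * e n l) k = (\<Sum>n\<in>S. c n * step_val m A b \<xi> (e n) k)"
proof -
  let ?d = "\<lambda>n i. stage_val A \<xi> (e n) i (k - 1) - stage_val A \<xi> (e n) i k"
  have "step_val m A b \<xi> (\<lambda>l. \<Sum>n\<in>S. c n * e n l) k
      = (\<Sum>n\<in>S. c n * e n k) + (\<Sum>i<m. \<Sum>n\<in>S. c n * (b i * \<xi> i k * ?d n i))"
    unfolding step_val_def stage_val_sum[OF assms]
    by (simp add: sum_distrib_left sum_subtractf[symmetric] algebra_simps)
  also have "\<dots> = (\<Sum>n\<in>S. c n * e n k) + (\<Sum>n\<in>S. \<Sum>i<m. c n * (b i * \<xi> i k * ?d n i))"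
    by (subst sum.swap) simp
  also have "\<dots> = (\<Sum>n\<in>S. c n * step_val m A b \<xi> (e n) k)"
    unfolding step_val_def by (simp add: sum.distrib sum_distrib_left algebra_simps)
  finally show ?thesis .
qed

lemma step_val_eq_pos_poly_sum:
  "step_val m A b \<xi> u k = (\<Sum>n\<le>m. u (k - int n) * pos_poly m A b k n \<xi>)"
proof -
  define v where "v = (\<lambda>l. \<Sum>n\<le>m. u (k - int n) * (if l = k - int n then 1 else 0 :: real))"
  have u_eq_v: "u t = v t" if "k - int m \<le> t" "t \<le> k" for t
  proof -
    have "v t = (\<Sum>n\<le>m. if n = nat (k - t) then u (k - int n) else 0)"
      unfolding v_def using that by (intro sum.cong) auto
    also have "\<dots> = u t"
      using that by (subst sum.delta) auto
    finally show ?thesis by simp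
  qed
  have "stage_val A \<xi> u i l = stage_val A \<xi> v i l" if "i < m" "l = k \<or> l = k - 1" for i l
    using that by (intro stage_val_local) (auto intro!: u_eq_v)
  then have "step_val m A b \<xi> u k = step_val m A b \<xi> v k"
    unfolding step_val_def using u_eq_v[of k] by (auto intro!: sum.cong)
  also have "\<dots> = (\<Sum>n\<le>m. u (k - int n) * pos_poly m A b k n \<xi>)"
    unfolding v_def pos_poly_def by (subst step_val_sum) auto
  finally show ?thesis .
qed

lemma stab_fun_eq_pos_poly_expansion:
  assumes "erk m A" "\<delta> > 0"
  shows "stab_fun m A b z = (\<Sum>n\<le>m. pos_poly m A b 0 n (\<lambda>_ _. \<delta>) * (z / \<delta> + 1) ^ n)"
proof -
  define w where "w = z / \<delta> + 1"
  have "z = \<delta> * (w - 1)"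
    using assms(2) by (simp add: w_def field_simps)
  then have "stab_fun m A b z = step_val m A b (\<lambda>_ _. \<delta>) (\<lambda>l. w ^ nat (0 - l)) 0"
    using step_val_geometric[OF assms(1), of b \<delta> w 0] by simp
  also have "\<dots> = (\<Sum>n\<le>m. w ^ n * pos_poly m A b 0 n (\<lambda>_ _. \<delta>))"
    by (subst step_val_eq_pos_poly_sum) simp
  finally show ?thesis
    by (simp add: w_def mult.commute)
qed

lemma higher_deriv_affine_power_sum:
  fixes a \<beta> :: real
  assumes "\<forall>i\<in>S. c i \<ge> 0" "a \<ge> 0"
  shows "\<exists>c' e'. (\<forall>i\<in>S. c' i \<ge> 0) \<and>
           (deriv ^^ j) (\<lambda>z. \<Sum>i\<in>S. c i * (a * z + \<beta>) ^ e i) = (\<lambda>z. \<Sum>i\<in>S. c' i * (a * z + \<beta>) ^ e' i)"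
proof (induction j)
  case 0
  then show ?case using assms by auto
next
  case (Suc j)
  then obtain c' e' where c'_nonneg: "\<forall>i\<in>S. c' i \<ge> 0"
    and IH: "(deriv ^^ j) (\<lambda>z. \<Sum>i\<in>S. c i * (a * z + \<beta>) ^ e i) = (\<lambda>z. \<Sum>i\<in>S. c' i * (a * z + \<beta>) ^ e' i)"
    by blast
  have "((\<lambda>z. \<Sum>i\<in>S. c' i * (a * z + \<beta>) ^ e' i) has_field_derivative
          (\<Sum>i\<in>S. (c' i * real (e' i) * a) * (a * z + \<beta>) ^ (e' i - 1))) (at z)" for z
    by (auto intro!: derivative_eq_intros sum.cong)
  then have "deriv (\<lambda>z. \<Sum>i\<in>S. c' i * (a * z + \<beta>) ^ e' i)
               = (\<lambda>z. \<Sum>i\<in>S. (c' i * real (e' i) * a) * (a * z + \<beta>) ^ (e' i - 1))"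
    using DERIV_imp_deriv by blast
  then show ?case
    using c'_nonneg assms(2) IH
    by (intro exI[of _ "\<lambda>i. c' i * real (e' i) * a"] exI[of _ "\<lambda>i. e' i - 1"]) simp
qed

lemma higher_deriv_affine_power_sum_nonneg:
  fixes a \<beta> :: real
  assumes "\<forall>i\<in>S. c i \<ge> 0" "a \<ge> 0" "a * z + \<beta> \<ge> 0"
  shows "(deriv ^^ j) (\<lambda>z. \<Sum>i\<in>S. c i * (a * z + \<beta>) ^ e i) z \<ge> 0"
proof -
  obtain c' e' where "\<forall>i\<in>S. c' i \<ge> 0"
    and "(deriv ^^ j) (\<lambda>z. \<Sum>i\<in>S. c i * (a * z + \<beta>) ^ e i) = (\<lambda>z. \<Sum>i\<in>S. c' i * (a * z + \<beta>) ^ e' i)"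
    using higher_deriv_affine_power_sum[OF assms(1,2)] by blast
  then show ?thesis
    using assms(3) by (auto intro!: sum_nonneg)
qed

lemma stab_fun_higher_deriv_nonneg:
  assumes "erk m A" "\<delta> > 0" "\<forall>n\<le>m. pos_poly m A b 0 n (\<lambda>_ _. \<delta>) \<ge> 0" "z \<in> {-\<delta>..0}"
  shows "(deriv ^^ j) (stab_fun m A b) z \<ge> 0"
proof -
  have "stab_fun m A b = (\<lambda>z. \<Sum>n\<le>m. pos_poly m A b 0 n (\<lambda>_ _. \<delta>) * ((1 / \<delta>) * z + 1) ^ n)"
    using stab_fun_eq_pos_poly_expansion[OF assms(1,2)] by auto
  moreover have "(deriv ^^ j) (\<lambda>z. \<Sum>n\<le>m. pos_poly m A b 0 n (\<lambda>_ _. \<delta>) * ((1 / \<delta>) * z + 1) ^ n) z \<ge> 0"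
    using assms(2-4) by (intro higher_deriv_affine_power_sum_nonneg) (auto simp: field_simps)
  ultimately show ?thesis
    by simp
qed

lemma abs_mono_radius_ge:
  assumes "r \<ge> 0" "\<And>j z. z \<in> {-r..0} \<Longrightarrow> (deriv ^^ j) \<phi> z \<ge> 0"
  shows "ereal r \<le> abs_mono_radius \<phi>"
  unfolding abs_mono_radius_def using assms by (intro Sup_upper) blast

theorem proposition1:
  fixes m :: nat and A :: "nat \<Rightarrow> nat \<Rightarrow> real" and b :: "nat \<Rightarrow> real"
  assumes "m \<ge> 1" and "erk m A"
  shows "stepsize_coeff m A b \<le> abs_mono_radius (stab_fun m A b)"
  unfolding stepsize_coeff_def
proof (rule Sup_least)
  have radius_nonneg: "0 \<le> abs_mono_radius (stab_fun m A b)"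
    unfolding abs_mono_radius_def by (rule Sup_upper) simp
  fix x
  assume "x \<in> insert 0 {ereal \<delta> | \<delta>. \<delta> \<ge> 0 \<and>
      (\<forall>i\<le>m. \<forall>k::int. \<forall>\<xi>. (\<forall>j l. 0 \<le> \<xi> j l \<and> \<xi> j l \<le> \<delta>) \<longrightarrow> pos_poly m A b k i \<xi> \<ge> 0)}"
  then consider "x \<le> 0" | \<delta> where "x = ereal \<delta>" "\<delta> > 0"
      "\<forall>i\<le>m. pos_poly m A b 0 i (\<lambda>_ _. \<delta>) \<ge> 0"
    by (fastforce simp: zero_ereal_def)
  then show "x \<le> abs_mono_radius (stab_fun m A b)"
  proof cases
    case 1
    then show ?thesis using radius_nonneg by order
  next
    case 2
    then show ?thesis
      using abs_mono_radius_ge stab_fun_higher_deriv_nonneg[OF assms(2)] by auto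
  qed
qed

end
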